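(* Let $k\in\mathbb{R}$, $a_1>0$, $c>0$ and $\gamma\ge 1$ be fixed, with $k\neq 0$ and $c^2/\gamma\neq k^2a_1^2$, and let $c_T(k)$ denote a fixed (possibly complex) square root of $c^2/\gamma-k^2a_1^2$. For $Pr>0$ consider $$P(X)= X^{3} + 2\,i\,k\,a_1 \left( 1+\frac{3\,\gamma}{4\,Pr} \right)X^{2} - \left(c^{2} + \frac{3\,\gamma}{Pr}a_1^2\,k^2\right)X - i\,\frac{3\,k\,a_1\,c^2}{2\,Pr}.$$ Then, for small $Pr>0$, the three roots $\xi^{(-)}_{Pr},\xi^{(0)}_{Pr},\xi^{(+)}_{Pr}$ of $P$ satisfy, as $Pr\to0$, $$\xi_{Pr}^{(\mp)}=-ik\,a_1\mp c_T(k)\pm\frac{(\gamma-1)\,c^2\,(k\,a_1\mp i\,c_T(k))}{3\,\gamma^2\,k\,a_1\,c_T(k)}\,Pr+\mathcal{O}(Pr^2),$$ $$\xi_{Pr}^{(0)}=i\,\frac{3\,k\,a_1\,\gamma}{2\,Pr}+\mathcal{O}(Pr),$$ where $\xi^{(\mp)}_{Pr}$ are smooth in $Pr$ near $0$ with $\xi^{(\mp)}_0=-ika_1\mp c_T(k)$.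
   Context: $P$ is the dispersion polynomial of the linearized 1D compressible Navier–Stokes equations, with $a_1=2\mu/(3\rho)$, $c$ the adiabatic sound speed, $\gamma=C_p/C_v$ and $Pr$ the Prandtl number. In the formula for $\xi^{(\mp)}_{Pr}$, the upper signs give $\xi^{(-)}_{Pr}$ and the lower signs give $\xi^{(+)}_{Pr}$. *)

theory Defs
  imports "HOL-Analysis.Analysis" "HOL-Library.Landau_Symbols"
begin

definition dispP :: "real \<Rightarrow> real \<Rightarrow> real \<Rightarrow> real \<Rightarrow> real \<Rightarrow> complex poly" where
  "dispP a1 c \<gamma> k Pr =
     [: - \<i> * complex_of_real (3 * k * a1 * c^2 / (2 * Pr)),
        - complex_of_real (c^2 + 3 * \<gamma> / Pr * a1^2 * k^2),
        2 * \<i> * complex_of_real (k * a1 * (1 + 3 * \<gamma> / (4 * Pr))),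
        1 :]"

definition nth_vderiv :: "nat \<Rightarrow> (real \<Rightarrow> 'a::real_normed_vector) \<Rightarrow> real \<Rightarrow> 'a" where
  "nth_vderiv n f = ((\<lambda>g t. vector_derivative g (at t)) ^^ n) f"

definition smooth_on :: "real set \<Rightarrow> (real \<Rightarrow> 'a::real_normed_vector) \<Rightarrow> bool" where
  "smooth_on S f \<longleftrightarrow> open S \<and> (\<forall>n. nth_vderiv n f differentiable_on S)"

end

theory Submission
  imports Defs "HOL-Complex_Analysis.Complex_Analysis"
begin

(* Multiplied by Pr, the equation P(X) = 0 becomes Pr R(X) + S(X) = 0 with
   R(X) = X^3 + 2 i k a1 X^2 - c^2 X and
   S(X) = (3 gamma/2) i k a1 (X^2 + 2 i k a1 X - c^2/gamma),
   whose roots X0 = -i k a1 -+ cT are simple. Where R(X0) does not vanish, the equation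
   near X0 reads -S(X)/R(X) = Pr, so the holomorphic inverse function theorem gives a
   root branch that is holomorphic in Pr, with slope -R(X0)/S'(X0); this slope is the
   first-order coefficient of the statement. For gamma = 1, R and S share the root X0 and
   the branch is constant. Restricted to real Pr the branches are smooth, and Taylor's
   formula gives the O(Pr^2) remainders. The third root is then determined by the sum
   of the roots, which picks up the 1/Pr term of the X^2 coefficient. *)

lemma has_vector_derivative_higher_deriv_of_real:
  fixes G :: "complex \<Rightarrow> complex"
  assumes "G holomorphic_on S" "open S" "of_real t \<in> S"
  shows "((\<lambda>s. (deriv ^^ n) G (of_real s)) has_vector_derivative (deriv ^^ Suc n) G (of_real t)) (at t)"
proof -
  have "(deriv ^^ n) G holomorphic_on S"
    using assms(1,2) by (rule holomorphic_higher_deriv)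
  then have "((deriv ^^ n) G has_field_derivative (deriv ^^ Suc n) G (of_real t)) (at (of_real t))"
    using assms(2,3) by (simp add: holomorphic_derivI)
  then show ?thesis
    by (rule has_vector_derivative_real_field)
qed

lemma nth_vderiv_holomorphic_of_real:
  fixes G :: "complex \<Rightarrow> complex"
  assumes "G holomorphic_on S" "open S" "open T" "\<And>s. s \<in> T \<Longrightarrow> of_real s \<in> S" "t \<in> T"
  shows "nth_vderiv n (\<lambda>s. G (of_real s)) t = (deriv ^^ n) G (of_real t)"
  using assms(5)
proof (induction n arbitrary: t)
  case 0
  then show ?case by (simp add: nth_vderiv_def)
next
  case (Suc n)
  have "(nth_vderiv n (\<lambda>s. G (of_real s)) has_vector_derivative (deriv ^^ Suc n) G (of_real t)) (at t)"
    using has_vector_derivative_higher_deriv_of_real[OF assms(1,2,4), of t n]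
    by (rule has_vector_derivative_transform_within_open) (use Suc assms(3) in auto)
  then show ?case
    by (simp add: nth_vderiv_def vector_derivative_at)
qed

lemma smooth_on_holomorphic_of_real:
  fixes G :: "complex \<Rightarrow> complex"
  assumes "G holomorphic_on S" "open S" "open T" "\<And>s. s \<in> T \<Longrightarrow> of_real s \<in> S"
  shows "smooth_on T (\<lambda>s. G (of_real s))"
  unfolding smooth_on_def differentiable_on_def
proof (intro conjI allI ballI)
  fix n t assume "t \<in> T"
  have "(nth_vderiv n (\<lambda>s. G (of_real s)) has_vector_derivative (deriv ^^ Suc n) G (of_real t)) (at t)"
    using has_vector_derivative_higher_deriv_of_real[OF assms(1,2,4), of t n]
    by (rule has_vector_derivative_transform_within_open)
       (use \<open>t \<in> T\<close> assms nth_vderiv_holomorphic_of_real[OF assms] in auto)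
  then show "nth_vderiv n (\<lambda>s. G (of_real s)) differentiable at t within T"
    using differentiableI_vector differentiable_at_withinI by blast
qed fact

lemma holomorphic_taylor1_bigo:
  fixes G :: "complex \<Rightarrow> complex"
  assumes "G holomorphic_on S" "open S" "x \<in> S"
  shows "(\<lambda>z. G z - G x - deriv G x * (z - x)) \<in> O[at x](\<lambda>z. (z - x)^2)"
proof -
  define H where "H z = (if z = x then deriv G x else (G z - G x) / (z - x))" for z
  have "H holomorphic_on S"
    unfolding H_def using assms(1,2) by (rule pole_lemma_open)
  then have "(H has_field_derivative deriv H x) (at x)"
    using assms(2,3) by (simp add: holomorphic_derivI)
  then have "((\<lambda>z. (H z - H x) / (z - x)) \<longlongrightarrow> deriv H x) (at x)"
    by (simp add: has_field_derivative_iff)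
  moreover have "\<forall>\<^sub>F z in at x. (H z - H x) / (z - x) = (G z - G x - deriv G x * (z - x)) / (z - x)^2"
    by (auto simp: eventually_at_filter H_def field_simps power2_eq_square)
  ultimately have "((\<lambda>z. (G z - G x - deriv G x * (z - x)) / (z - x)^2) \<longlongrightarrow> deriv H x) (at x)"
    using tendsto_cong by fastforce
  then show ?thesis
    by (rule bigoI_tendsto) (simp add: eventually_at_filter)
qed

lemma bigo_at_right_of_real:
  fixes f g :: "complex \<Rightarrow> 'a :: real_normed_field"
  assumes "f \<in> O[at 0](g)"
  shows "(\<lambda>t::real. f (of_real t)) \<in> O[at_right 0](\<lambda>t. g (of_real t))"
proof -
  have "filterlim complex_of_real (at 0) (at_right 0)"
  proof (rule filterlim_atI)
    show "(complex_of_real \<longlongrightarrow> 0) (at_right 0)"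
      by (rule tendsto_of_real[OF tendsto_ident_at, where a = 0, simplified])
    show "\<forall>\<^sub>F t in at_right 0. complex_of_real t \<noteq> 0"
      using eventually_at_right_less[of "0::real"] by (rule eventually_mono) simp
  qed
  then show ?thesis
    by (rule landau_o.big.compose[OF assms])
qed

lemma field_differentiable_bigo:
  fixes G :: "'a :: real_normed_field \<Rightarrow> 'a"
  assumes "G field_differentiable at x"
  shows "(\<lambda>z. G z - G x) \<in> O[at x](\<lambda>z. z - x)"
proof -
  obtain D where "(G has_field_derivative D) (at x)"
    using assms by (auto simp: field_differentiable_def)
  then have "((\<lambda>z. (G z - G x) / (z - x)) \<longlongrightarrow> D) (at x)"
    by (simp add: has_field_derivative_iff)
  then show ?thesis
    by (rule bigoI_tendsto) (simp add: eventually_at_filter)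
qed

lemma holomorphic_expansion_at_right_of_real:
  fixes G :: "complex \<Rightarrow> complex"
  assumes "G holomorphic_on ball 0 e" "e > 0"
  shows "(\<lambda>t. G (of_real t) - (G 0 + deriv G 0 * of_real t)) \<in> O[at_right 0](\<lambda>t. of_real (t^2))"
    and "(\<lambda>t. G (of_real t) - G 0) \<in> O[at_right 0](\<lambda>t. of_real t)"
proof -
  show "(\<lambda>t. G (of_real t) - (G 0 + deriv G 0 * of_real t)) \<in> O[at_right 0](\<lambda>t. of_real (t^2))"
    using bigo_at_right_of_real[OF holomorphic_taylor1_bigo[OF assms(1) open_ball]] assms(2)
    by (simp add: diff_diff_eq)
  have "G field_differentiable at 0"
    using assms(2) by (intro holomorphic_on_imp_differentiable_at[OF assms(1)]) auto
  then show "(\<lambda>t. G (of_real t) - G 0) \<in> O[at_right 0](\<lambda>t. of_real t)"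
    using bigo_at_right_of_real[OF field_differentiable_bigo] by simp
qed

lemma holomorphic_local_inverse:
  fixes F :: "complex \<Rightarrow> complex"
  assumes holF: "F holomorphic_on S" and "open S" "X0 \<in> S" and dF: "deriv F X0 \<noteq> 0"
  obtains e G where "e > 0" "G holomorphic_on ball (F X0) e" "G (F X0) = X0"
    "\<And>w. w \<in> ball (F X0) e \<Longrightarrow> G w \<in> S \<and> F (G w) = w"
    "deriv G (F X0) = inverse (deriv F X0)"
proof -
  obtain r where r: "r > 0" "ball X0 r \<subseteq> S" "open (F ` ball X0 r)" "inj_on F (ball X0 r)"
    using has_complex_derivative_locally_invertible[OF holF \<open>X0 \<in> S\<close> \<open>open S\<close> dF] .
  obtain G where G: "G holomorphic_on F ` ball X0 r"
    "\<And>z. z \<in> ball X0 r \<Longrightarrow> deriv F z * deriv G (F z) = 1"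
    "\<And>z. z \<in> ball X0 r \<Longrightarrow> G (F z) = z"
    using holomorphic_has_inverse[OF holomorphic_on_subset[OF holF r(2)] open_ball r(4)] by metis
  have "F X0 \<in> F ` ball X0 r"
    using r(1) by simp
  then obtain e where e: "e > 0" "ball (F X0) e \<subseteq> F ` ball X0 r"
    using r(3) open_contains_ball by blast
  show ?thesis
  proof
    show "G holomorphic_on ball (F X0) e"
      using G(1) e(2) by (rule holomorphic_on_subset)
    show "G (F X0) = X0" "deriv G (F X0) = inverse (deriv F X0)"
      using G(2,3)[of X0] r(1) dF by (auto simp: field_simps)
    show "G w \<in> S \<and> F (G w) = w" if w: "w \<in> ball (F X0) e" for w
    proof -
      obtain z where "z \<in> ball X0 r" "w = F z"
        using w e(2) by blast
      then show ?thesis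
        using G(3) r(2) by auto
    qed
  qed fact
qed

lemma linear_pencil_root_branch:
  fixes R S :: "complex \<Rightarrow> complex"
  assumes holR: "R holomorphic_on U" and holS: "S holomorphic_on U" and "open U" "X0 \<in> U"
    and S0: "S X0 = 0" and R0: "R X0 \<noteq> 0" and dS: "deriv S X0 \<noteq> 0"
  obtains e G where "e > 0" "G holomorphic_on ball 0 e" "G 0 = X0"
    "deriv G 0 = - R X0 / deriv S X0"
    "\<And>p. p \<in> ball 0 e \<Longrightarrow> G p \<in> U \<and> p * R (G p) + S (G p) = 0"
proof -
  define V where "V = U \<inter> R -` (- {0})"
  define F where "F X = - (S X / R X)" for X
  have "open V"
    unfolding V_def using holR \<open>open U\<close>
    by (intro continuous_open_preimage holomorphic_on_imp_continuous_on) auto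
  have "X0 \<in> V"
    using \<open>X0 \<in> U\<close> R0 by (simp add: V_def)
  have holF: "F holomorphic_on V"
    unfolding F_def V_def
    by (intro holomorphic_intros holomorphic_on_subset[OF holR] holomorphic_on_subset[OF holS]) auto
  have "(R has_field_derivative deriv R X0) (at X0)" "(S has_field_derivative deriv S X0) (at X0)"
    using holR holS \<open>open U\<close> \<open>X0 \<in> U\<close> by (auto intro: holomorphic_derivI)
  then have "(F has_field_derivative
      - ((deriv S X0 * R X0 - S X0 * deriv R X0) / (R X0 * R X0))) (at X0)"
    unfolding F_def using R0 by (intro DERIV_minus DERIV_divide)
  then have dF: "deriv F X0 = - deriv S X0 / R X0"
    using S0 by (simp add: DERIV_imp_deriv)
  have F0: "F X0 = 0"
    using S0 by (simp add: F_def)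
  obtain e G where "e > 0" "G holomorphic_on ball 0 e" "G 0 = X0"
      and inv: "\<And>w. w \<in> ball 0 e \<Longrightarrow> G w \<in> V \<and> F (G w) = w"
      and "deriv G 0 = inverse (deriv F X0)"
    using holomorphic_local_inverse[OF holF \<open>open V\<close> \<open>X0 \<in> V\<close>] dF dS R0 F0 by auto
  show ?thesis
  proof
    show "deriv G 0 = - R X0 / deriv S X0"
      using \<open>deriv G 0 = inverse (deriv F X0)\<close> dF by simp
    show "G p \<in> U \<and> p * R (G p) + S (G p) = 0" if "p \<in> ball 0 e" for p
      using inv[OF that] by (auto simp: V_def F_def field_simps add_eq_0_iff)
  qed fact+
qed

lemma monic_cubic_factor_two_roots:
  fixes x y z :: "'a :: idom"
  assumes "x \<noteq> y" and "poly [:q0, q1, q2, 1:] x = 0" and "poly [:q0, q1, q2, 1:] y = 0"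
  shows "poly [:q0, q1, q2, 1:] z = (z - x) * (z - (- q2 - x - y)) * (z - y)"
proof -
  have "(x - y) * (q1 + (x^2 + x*y + y^2 + q2*(x + y))) =
      poly [:q0, q1, q2, 1:] x - poly [:q0, q1, q2, 1:] y"
    by (simp add: algebra_simps power2_eq_square)
  also have "\<dots> = 0"
    by (simp only: assms(2,3) diff_zero)
  finally have "q1 + (x^2 + x*y + y^2 + q2*(x + y)) = 0"
    using assms(1) by simp
  then have q1: "q1 = - (x^2 + x*y + y^2 + q2*(x + y))"
    by (simp only: eq_neg_iff_add_eq_0)
  have q0: "q0 = - (x^3 + q2*x^2 + q1*x)"
    using assms(2) by (simp add: eq_neg_iff_add_eq_0 algebra_simps power2_eq_square power3_eq_cube)
  show ?thesis
    unfolding q0 q1 by (simp add: algebra_simps power2_eq_square power3_eq_cube)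
qed

definition dispR :: "real \<Rightarrow> real \<Rightarrow> real \<Rightarrow> complex \<Rightarrow> complex" where
  "dispR a1 c k X = X^3 + 2 * \<i> * of_real (k * a1) * X^2 - of_real (c^2) * X"

definition dispS :: "real \<Rightarrow> real \<Rightarrow> real \<Rightarrow> real \<Rightarrow> complex \<Rightarrow> complex" where
  "dispS a1 c \<gamma> k X = of_real (3 * \<gamma> / 2) * \<i> * of_real (k * a1) *
     (X^2 + 2 * \<i> * of_real (k * a1) * X - of_real (c^2 / \<gamma>))"

lemma dispP_scaled:
  assumes "p \<noteq> 0" "\<gamma> \<noteq> 0"
  shows "of_real p * poly (dispP a1 c \<gamma> k p) X = of_real p * dispR a1 c k X + dispS a1 c \<gamma> k X"
  using assms by (simp add: dispP_def dispR_def dispS_def field_simps power2_eq_square power3_eq_cube)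

lemma holomorphic_dispR: "dispR a1 c k holomorphic_on U"
  unfolding dispR_def by (intro holomorphic_intros)

lemma holomorphic_dispS: "dispS a1 c \<gamma> k holomorphic_on U"
  unfolding dispS_def by (intro holomorphic_intros)

context
  fixes a1 c \<gamma> k :: real and cT :: complex
  assumes cT: "cT^2 = of_real (c^2 / \<gamma> - k^2 * a1^2)"
begin

lemma quadratic_at_branch_point:
  "(- \<i> * k * a1 - cT)^2 + 2 * \<i> * of_real (k * a1) * (- \<i> * k * a1 - cT) = of_real (c^2 / \<gamma>)"
proof -
  have "(- \<i> * k * a1 - cT)^2 + 2 * \<i> * of_real (k * a1) * (- \<i> * k * a1 - cT) =
      cT^2 + of_real (k^2 * a1^2)"
    by (simp add: algebra_simps power2_eq_square)
  then show ?thesis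
    using cT by simp
qed

lemma dispS_at_branch_point: "dispS a1 c \<gamma> k (- \<i> * k * a1 - cT) = 0"
  using quadratic_at_branch_point by (simp add: dispS_def)

lemma deriv_dispS_at_branch_point:
  "deriv (dispS a1 c \<gamma> k) (- \<i> * k * a1 - cT) = - 3 * \<gamma> * \<i> * k * a1 * cT"
proof -
  have "(dispS a1 c \<gamma> k has_field_derivative
          of_real (3 * \<gamma> / 2) * \<i> * of_real (k * a1) *
            (2 * (- \<i> * k * a1 - cT) + 2 * \<i> * of_real (k * a1)))
        (at (- \<i> * k * a1 - cT))"
    unfolding dispS_def by (auto intro!: derivative_eq_intros)
  then show ?thesis
    by (simp add: DERIV_imp_deriv algebra_simps)
qed

lemma dispR_at_branch_point:
  "dispR a1 c k (- \<i> * k * a1 - cT) = (- \<i> * k * a1 - cT) * of_real (c^2 / \<gamma> - c^2)"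
proof -
  have "dispR a1 c k (- \<i> * k * a1 - cT) = (- \<i> * k * a1 - cT) *
      ((- \<i> * k * a1 - cT)^2 + 2 * \<i> * of_real (k * a1) * (- \<i> * k * a1 - cT) - of_real (c^2))"
    by (simp add: dispR_def algebra_simps power2_eq_square power3_eq_cube)
  then show ?thesis
    by (simp only: quadratic_at_branch_point of_real_diff)
qed

lemma dispR_at_branch_point_neq_0:
  assumes "c \<noteq> 0" "\<gamma> \<noteq> 0" "\<gamma> \<noteq> 1"
  shows "dispR a1 c k (- \<i> * k * a1 - cT) \<noteq> 0"
proof -
  have "- \<i> * k * a1 - cT \<noteq> 0"
  proof
    assume "- \<i> * k * a1 - cT = 0"
    then have "of_real (c^2 / \<gamma>) = (0 :: complex)"
      using quadratic_at_branch_point by simp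
    then show False
      using assms by simp
  qed
  moreover have "c^2 / \<gamma> - c^2 \<noteq> 0"
    using assms by (simp add: field_simps)
  ultimately show ?thesis
    unfolding dispR_at_branch_point by (simp del: of_real_diff)
qed

lemma dispP_branch_slope:
  assumes "k * a1 \<noteq> 0" "\<gamma> \<noteq> 0" "cT \<noteq> 0"
  shows "- dispR a1 c k (- \<i> * k * a1 - cT) / deriv (dispS a1 c \<gamma> k) (- \<i> * k * a1 - cT)
    = (\<gamma> - 1) * c^2 * (k * a1 - \<i> * cT) / (3 * \<gamma>^2 * k * a1 * cT)"
  unfolding dispR_at_branch_point deriv_dispS_at_branch_point
  using assms by (simp add: field_simps power2_eq_square)

end

lemma dispP_root_branch:
  fixes a1 c \<gamma> k :: real and cT :: complex
  assumes ka: "k * a1 \<noteq> 0" and "c \<noteq> 0" "\<gamma> \<noteq> 0" "cT \<noteq> 0"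
    and cT: "cT^2 = of_real (c^2 / \<gamma> - k^2 * a1^2)"
  obtains e G where "e > 0" "G holomorphic_on ball 0 e" "G 0 = - \<i> * k * a1 - cT"
    "deriv G 0 = (\<gamma> - 1) * c^2 * (k * a1 - \<i> * cT) / (3 * \<gamma>^2 * k * a1 * cT)"
    "\<And>p. p \<noteq> 0 \<Longrightarrow> \<bar>p\<bar> < e \<Longrightarrow>
       poly (dispP a1 c \<gamma> k p) (G (of_real p)) = 0 \<and> G (of_real p) \<in> ball (G 0) (norm cT)"
proof -
  define X0 where "X0 = - \<i> * k * a1 - cT"
  have root: "poly (dispP a1 c \<gamma> k p) X = 0"
    if "p \<noteq> 0" "of_real p * dispR a1 c k X + dispS a1 c \<gamma> k X = 0" for p X
    using dispP_scaled[of p \<gamma> a1 c k X] that \<open>\<gamma> \<noteq> 0\<close> by simp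
  have S0: "dispS a1 c \<gamma> k X0 = 0"
    unfolding X0_def using cT by (rule dispS_at_branch_point)
  show ?thesis
  proof (cases "\<gamma> = 1")
    case True
    then have "dispR a1 c k X0 = 0"
      using dispR_at_branch_point[OF cT] by (simp add: X0_def)
    then show ?thesis
      using that[of 1 "\<lambda>_. X0"] root S0 \<open>cT \<noteq> 0\<close> True by (auto simp: X0_def)
  next
    case False
    have R0: "dispR a1 c k X0 \<noteq> 0"
      unfolding X0_def using cT \<open>c \<noteq> 0\<close> \<open>\<gamma> \<noteq> 0\<close> False by (rule dispR_at_branch_point_neq_0)
    have "deriv (dispS a1 c \<gamma> k) X0 \<noteq> 0"
      using deriv_dispS_at_branch_point[OF cT] ka \<open>\<gamma> \<noteq> 0\<close> \<open>cT \<noteq> 0\<close> by (simp add: X0_def)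
    moreover have "X0 \<in> ball X0 (norm cT)"
      using \<open>cT \<noteq> 0\<close> by simp
    ultimately obtain e G where "e > 0" "G holomorphic_on ball 0 e" "G 0 = X0"
        and "deriv G 0 = - dispR a1 c k X0 / deriv (dispS a1 c \<gamma> k) X0"
        and branch: "\<And>p. p \<in> ball 0 e \<Longrightarrow>
          G p \<in> ball X0 (norm cT) \<and> p * dispR a1 c k (G p) + dispS a1 c \<gamma> k (G p) = 0"
      using linear_pencil_root_branch[OF holomorphic_dispR holomorphic_dispS open_ball _ S0 R0] by blast
    then show ?thesis
      using that[of e G] branch root dispP_branch_slope[OF cT ka \<open>\<gamma> \<noteq> 0\<close> \<open>cT \<noteq> 0\<close>]
      by (auto simp: X0_def)
  qed
qed

lemma dispP_factor_two_roots:
  assumes "x \<noteq> y" "poly (dispP a1 c \<gamma> k p) x = 0" "poly (dispP a1 c \<gamma> k p) y = 0"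
  shows "poly (dispP a1 c \<gamma> k p) X =
    (X - x) * (X - (- (2 * \<i> * of_real (k * a1 * (1 + 3 * \<gamma> / (4 * p)))) - x - y)) * (X - y)"
  using assms unfolding dispP_def by (rule monic_cubic_factor_two_roots)

lemma dispP_third_root_bigo:
  fixes xm xp :: "real \<Rightarrow> complex"
  assumes sum0: "xm 0 + xp 0 = - 2 * \<i> * k * a1"
    and "(\<lambda>t. xm t - xm 0) \<in> O[at_right 0](\<lambda>t. of_real t)"
    and "(\<lambda>t. xp t - xp 0) \<in> O[at_right 0](\<lambda>t. of_real t)"
  shows "(\<lambda>Pr. (- (2 * \<i> * of_real (k * a1 * (1 + 3 * \<gamma> / (4 * Pr)))) - xm Pr - xp Pr)
      - (- \<i> * of_real (3 * k * a1 * \<gamma> / (2 * Pr)))) \<in> O[at_right 0](\<lambda>Pr. of_real Pr)"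
proof -
  have "\<forall>\<^sub>F Pr in at_right 0. - (xm Pr - xm 0) - (xp Pr - xp 0) =
      (- (2 * \<i> * of_real (k * a1 * (1 + 3 * \<gamma> / (4 * Pr)))) - xm Pr - xp Pr)
      - (- \<i> * of_real (3 * k * a1 * \<gamma> / (2 * Pr)))"
    using eventually_at_right_less[of "0::real"]
  proof eventually_elim
    case (elim Pr)
    then have "k * a1 * (1 + 3 * \<gamma> / (4 * Pr)) = k * a1 + 3 * k * a1 * \<gamma> / (2 * Pr) / 2"
      by (simp add: field_simps)
    then have "(- (2 * \<i> * of_real (k * a1 * (1 + 3 * \<gamma> / (4 * Pr)))) - xm Pr - xp Pr)
        - (- \<i> * of_real (3 * k * a1 * \<gamma> / (2 * Pr))) = - 2 * \<i> * k * a1 - xm Pr - xp Pr"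
      by (simp add: algebra_simps)
    then show ?case
      using sum0 by (simp add: algebra_simps)
  qed
  moreover have "(\<lambda>Pr. - (xm Pr - xm 0) - (xp Pr - xp 0)) \<in> O[at_right 0](\<lambda>Pr. of_real Pr)"
  proof (rule sum_in_bigo(2))
    show "(\<lambda>Pr. - (xm Pr - xm 0)) \<in> O[at_right 0](\<lambda>Pr. of_real Pr)"
      using assms(2) by (simp only: landau_o.big.uminus_in_iff)
  qed fact
  ultimately show ?thesis
    by (rule landau_o.big.in_cong[THEN iffD1])
qed

theorem proposition3:
  fixes k a1 c \<gamma> :: real and cT :: complex
  assumes "a1 > 0" and "c > 0" and "\<gamma> \<ge> 1" and "k \<noteq> 0"
    and "c^2 / \<gamma> \<noteq> k^2 * a1^2"
    and "cT^2 = complex_of_real (c^2 / \<gamma> - k^2 * a1^2)"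
  shows "\<exists>\<delta>>0. \<exists>(xm :: real \<Rightarrow> complex) (x0 :: real \<Rightarrow> complex) (xp :: real \<Rightarrow> complex).
     (\<forall>Pr\<in>{0<..<\<delta>}. \<forall>X. poly (dispP a1 c \<gamma> k Pr) X = (X - xm Pr) * (X - x0 Pr) * (X - xp Pr))
   \<and> smooth_on {-\<delta><..<\<delta>} xm \<and> smooth_on {-\<delta><..<\<delta>} xp
   \<and> xm 0 = - \<i> * k * a1 - cT \<and> xp 0 = - \<i> * k * a1 + cT
   \<and> (\<lambda>Pr. xm Pr - (- \<i> * k * a1 - cT
          + (\<gamma> - 1) * c^2 * (k * a1 - \<i> * cT) / (3 * \<gamma>^2 * k * a1 * cT) * Pr))
       \<in> O[at_right 0](\<lambda>Pr. complex_of_real (Pr^2))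
   \<and> (\<lambda>Pr. xp Pr - (- \<i> * k * a1 + cT
          - (\<gamma> - 1) * c^2 * (k * a1 + \<i> * cT) / (3 * \<gamma>^2 * k * a1 * cT) * Pr))
       \<in> O[at_right 0](\<lambda>Pr. complex_of_real (Pr^2))
   \<and> (\<lambda>Pr. x0 Pr - (- \<i> * complex_of_real (3 * k * a1 * \<gamma> / (2 * Pr))))
       \<in> O[at_right 0](\<lambda>Pr. complex_of_real Pr)"
proof -
  have nz: "k * a1 \<noteq> 0" "c \<noteq> 0" "\<gamma> \<noteq> 0" "cT \<noteq> 0"
    using assms by (auto simp del: of_real_diff)
  obtain em Gm where "em > 0" and holm: "Gm holomorphic_on ball 0 em"
      and m0: "Gm 0 = - \<i> * k * a1 - cT"
      and dm: "deriv Gm 0 = (\<gamma> - 1) * c^2 * (k * a1 - \<i> * cT) / (3 * \<gamma>^2 * k * a1 * cT)"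
      and rootm: "\<And>p. p \<noteq> 0 \<Longrightarrow> \<bar>p\<bar> < em \<Longrightarrow>
         poly (dispP a1 c \<gamma> k p) (Gm (of_real p)) = 0 \<and> Gm (of_real p) \<in> ball (Gm 0) (norm cT)"
    using dispP_root_branch[OF nz assms(6)] by blast
  obtain ep Gp where "ep > 0" and holp: "Gp holomorphic_on ball 0 ep"
      and p0: "Gp 0 = - \<i> * k * a1 + cT"
      and dp: "deriv Gp 0 = - ((\<gamma> - 1) * c^2 * (k * a1 + \<i> * cT) / (3 * \<gamma>^2 * k * a1 * cT))"
      and rootp: "\<And>p. p \<noteq> 0 \<Longrightarrow> \<bar>p\<bar> < ep \<Longrightarrow>
         poly (dispP a1 c \<gamma> k p) (Gp (of_real p)) = 0 \<and> Gp (of_real p) \<in> ball (Gp 0) (norm cT)"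
    using dispP_root_branch[of k a1 c \<gamma> "- cT"] nz assms(6) by auto
  define \<delta> where "\<delta> = min em ep"
  define x0 where
    "x0 Pr = - (2 * \<i> * of_real (k * a1 * (1 + 3 * \<gamma> / (4 * Pr)))) - Gm (of_real Pr) - Gp (of_real Pr)" for Pr
  have "ball (Gm 0) (norm cT) \<inter> ball (Gp 0) (norm cT) = {}"
    by (rule disjoint_ballI) (simp add: m0 p0 dist_norm norm_minus_commute)
  then have factor:
      "poly (dispP a1 c \<gamma> k Pr) X = (X - Gm (of_real Pr)) * (X - x0 Pr) * (X - Gp (of_real Pr))"
    if "Pr \<in> {0<..<\<delta>}" for Pr X
    unfolding x0_def using rootm[of Pr] rootp[of Pr] that
    by (intro dispP_factor_two_roots) (auto simp: \<delta>_def)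
  have third:
      "(\<lambda>Pr. x0 Pr - (- \<i> * of_real (3 * k * a1 * \<gamma> / (2 * Pr)))) \<in> O[at_right 0](\<lambda>Pr. of_real Pr)"
    unfolding x0_def using m0 p0 holomorphic_expansion_at_right_of_real(2)[OF holm \<open>em > 0\<close>]
      holomorphic_expansion_at_right_of_real(2)[OF holp \<open>ep > 0\<close>]
    by (intro dispP_third_root_bigo) simp_all
  have "\<delta> > 0"
    using \<open>em > 0\<close> \<open>ep > 0\<close> by (simp add: \<delta>_def)
  show ?thesis
  proof (rule exI[of _ \<delta>], rule conjI[OF \<open>\<delta> > 0\<close>], rule exI[of _ "\<lambda>t. Gm (of_real t)"],
      rule exI[of _ x0], rule exI[of _ "\<lambda>t. Gp (of_real t)"], intro conjI)
    show "smooth_on {-\<delta><..<\<delta>} (\<lambda>t. Gm (of_real t))" "smooth_on {-\<delta><..<\<delta>} (\<lambda>t. Gp (of_real t))"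
      by (auto simp: \<delta>_def intro!: smooth_on_holomorphic_of_real[OF holm open_ball]
          smooth_on_holomorphic_of_real[OF holp open_ball])
  qed (use factor third m0 p0 holomorphic_expansion_at_right_of_real(1)[OF holm \<open>em > 0\<close>]
        holomorphic_expansion_at_right_of_real(1)[OF holp \<open>ep > 0\<close>] in \<open>auto simp: dm dp diff_diff_eq\<close>)
qed

end
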